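(* For each $n=1,\dots,N$: (i) $h_n(y,t)=h_n(2m_n-y,t)$ for all $y,t$ (where defined); in particular $h_n(\overline m_n,\cdot)=h_n(\underline m_n,\cdot)$; (ii) $y\mapsto h_n(y,t)$ is strictly increasing for $y\le\underline m_n$ and strictly decreasing for $y\ge\overline m_n$. Here for $n=1$ (resp. $n=N$), $\underline m_n=\overline m_n=-\infty$ (resp. $+\infty$).
   Context: $N<\infty$. $Z$ under $\overline{\mathbb{P}}$ is the difference of two independent Poisson processes with intensity $\beta>0$ (on $\mathbb{Z}$). $(a_n)_{n=1}^{N+1}$ is strictly increasing in $\mathbb{Z}\cup\{\pm\infty\}$, $a_1=-\infty$, $a_{N+1}=\infty$, $\bigcup_n[a_n,a_{n+1})=\mathbb{Z}\cup\{-\infty\}$, with $m_n=(a_n+a_{n+1}-1)/2\notin\mathbb{Z}$; $\underline m_n=\lfloor m_n\rfloor$, $\overline m_n=\lceil m_n\rceil$. $h_n(y,t)=\overline{\mathbb{P}}(Z_1\in[a_n,a_{n+1})\mid Z_t=y)$ for $y\in\mathbb{Z}$, $t\in[0,1]$. *)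

theory Defs
  imports "HOL-Probability.Probability"
begin

text \<open>Law of Z_s (= law of Z_{u+s} - Z_u): difference of two independent Poisson
  random variables with mean beta*s each; Z_0 = 0.\<close>
definition skellam_pmf :: "real \<Rightarrow> real \<Rightarrow> int pmf" where
  "skellam_pmf \<beta> s =
     (if s = 0 then return_pmf 0
      else map_pmf (\<lambda>(i, j). int i - int j)
             (pair_pmf (poisson_pmf (\<beta> * s)) (poisson_pmf (\<beta> * s))))"

text \<open>Joint law of (Z_t, Z_1) under Pbar (independent stationary increments).\<close>
definition joint_Zt_Z1 :: "real \<Rightarrow> real \<Rightarrow> (int \<times> int) pmf" where
  "joint_Zt_Z1 \<beta> t =
     do { x \<leftarrow> skellam_pmf \<beta> t; d \<leftarrow> skellam_pmf \<beta> (1 - t); return_pmf (x, x + d) }"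

text \<open>h_n(y,t) = Pbar(Z_1 \<in> [a_n, a_{n+1}) | Z_t = y)  (meaningful when Pbar(Z_t = y) > 0).\<close>
definition hfun :: "real \<Rightarrow> (nat \<Rightarrow> ereal) \<Rightarrow> nat \<Rightarrow> int \<Rightarrow> real \<Rightarrow> real" where
  "hfun \<beta> a n y t =
     measure_pmf.prob (cond_pmf (joint_Zt_Z1 \<beta> t) {p. fst p = y})
       {p. a n \<le> ereal (real_of_int (snd p)) \<and> ereal (real_of_int (snd p)) < a (Suc n)}"

text \<open>m_n = (a_n + a_{n+1} - 1)/2 (only meaningful when both endpoints are finite).\<close>
definition mid :: "(nat \<Rightarrow> ereal) \<Rightarrow> nat \<Rightarrow> real" where
  "mid a n = (real_of_ereal (a n) + real_of_ereal (a (Suc n)) - 1) / 2"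

definition mlow :: "(nat \<Rightarrow> ereal) \<Rightarrow> nat \<Rightarrow> ereal" where
  "mlow a n = (if a n = -\<infinity> then -\<infinity> else if a (Suc n) = \<infinity> then \<infinity>
               else ereal (real_of_int \<lfloor>mid a n\<rfloor>))"

definition mhigh :: "(nat \<Rightarrow> ereal) \<Rightarrow> nat \<Rightarrow> ereal" where
  "mhigh a n = (if a n = -\<infinity> then -\<infinity> else if a (Suc n) = \<infinity> then \<infinity>
               else ereal (real_of_int \<lceil>mid a n\<rceil>))"

end

theory Submission
  imports Defs
begin

text \<open>Given \<open>Z\<^sub>t = y\<close>, the endpoint is \<open>Z\<^sub>1 = y + D\<close> with \<open>D\<close> independent of \<open>Z\<^sub>t\<close> and distributed
  as the difference of two independent Poisson variables of mean \<open>\<beta>(1 - t)\<close>, so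
  \<open>h\<^sub>n(y, t) = P(a\<^sub>n \<le> y + D < a\<^sub>n\<^sub>+\<^sub>1)\<close>. The law of \<open>D\<close> is symmetric, which gives the reflection
  \<open>y \<mapsto> 2 m\<^sub>n - y\<close>, and its weights decrease strictly in \<open>|k|\<close> (a consequence of the
  log-concavity of the Poisson weights). Raising \<open>y\<close> by one adds the mass of \<open>D\<close> at
  \<open>a\<^sub>n - 1 - y\<close> and removes its mass at \<open>a\<^sub>n\<^sub>+\<^sub>1 - 1 - y\<close>; the first point is the closer one to
  \<open>0\<close> exactly when \<open>y + 1 \<le> m\<^sub>n\<close>, which gives strict monotonicity on either side of \<open>m\<^sub>n\<close>.\<close>

lemma strict_mono_on_int_Suc:
  fixes f :: "int \<Rightarrow> 'a::order"
  assumes convex: "\<And>x y z. x \<in> S \<Longrightarrow> y \<in> S \<Longrightarrow> x \<le> z \<Longrightarrow> z \<le> y \<Longrightarrow> z \<in> S"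
    and Suc_less: "\<And>y. y \<in> S \<Longrightarrow> y + 1 \<in> S \<Longrightarrow> f y < f (y + 1)"
  shows "strict_mono_on S f"
proof (rule monotone_onI)
  fix x y assume "x \<in> S" "y \<in> S" "x < y"
  have "z \<le> y \<Longrightarrow> f x < f z" if "x + 1 \<le> z" for z
    using that
  proof (induction z rule: int_ge_induct)
    case base
    have "x + 1 \<in> S" using convex[OF \<open>x \<in> S\<close> \<open>y \<in> S\<close>, of "x + 1"] base by simp
    then show ?case using Suc_less[OF \<open>x \<in> S\<close>] by simp
  next
    case (step z)
    have "z \<in> S" and "z + 1 \<in> S"
      using convex[OF \<open>x \<in> S\<close> \<open>y \<in> S\<close>] step.hyps step.prems by simp_all
    have "f x < f z" using step.IH step.prems by simp
    also have "f z < f (z + 1)" using Suc_less[OF \<open>z \<in> S\<close> \<open>z + 1 \<in> S\<close>] .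
    finally show ?case .
  qed
  then show "f x < f y" using \<open>x < y\<close> by simp
qed

lemma strict_antimono_on_int_Suc:
  fixes f :: "int \<Rightarrow> 'a::ordered_ab_group_add"
  assumes "\<And>x y z. x \<in> S \<Longrightarrow> y \<in> S \<Longrightarrow> x \<le> z \<Longrightarrow> z \<le> y \<Longrightarrow> z \<in> S"
    and "\<And>y. y \<in> S \<Longrightarrow> y + 1 \<in> S \<Longrightarrow> f (y + 1) < f y"
  shows "strict_antimono_on S f"
proof -
  have "strict_mono_on S (\<lambda>y. - f y)"
  proof (rule strict_mono_on_int_Suc)
    show "\<And>x y z. x \<in> S \<Longrightarrow> y \<in> S \<Longrightarrow> x \<le> z \<Longrightarrow> z \<le> y \<Longrightarrow> z \<in> S"
      by (fact assms(1))
    show "- f y < - f (y + 1)" if "y \<in> S" "y + 1 \<in> S" for y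
      using assms(2)[OF that] by simp
  qed
  then show ?thesis by (auto simp: monotone_on_def)
qed

lemma le_floor_half_iff: "y \<le> \<lfloor>real_of_int c / 2\<rfloor> \<longleftrightarrow> 2 * y \<le> c"
  unfolding le_floor_iff by linarith

lemma ceiling_half_le_iff: "\<lceil>real_of_int c / 2\<rceil> \<le> y \<longleftrightarrow> c \<le> 2 * y"
  unfolding ceiling_le_iff by linarith

lemma ceiling_add_floor_half:
  assumes "real_of_int c / 2 \<notin> \<int>"
  shows "real_of_int \<lceil>real_of_int c / 2\<rceil> + real_of_int \<lfloor>real_of_int c / 2\<rfloor> = real_of_int c"
proof -
  have floor: "\<lfloor>real_of_int c / 2\<rfloor> = c div 2"
    using floor_divide_of_int_eq[of c 2] by simp
  have "\<lceil>real_of_int c / 2\<rceil> = c div 2 + 1"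
    using assms by (auto simp: ceiling_altdef floor)
  then have "real_of_int \<lceil>real_of_int c / 2\<rceil> + real_of_int \<lfloor>real_of_int c / 2\<rfloor> =
             real_of_int (2 * (c div 2) + 1)"
    by (simp add: floor)
  also have "2 * (c div 2) + 1 = c"
    using assms by (auto intro: odd_two_times_div_two_succ elim!: evenE)
  finally show ?thesis .
qed

definition poisson_diff_pmf :: "real \<Rightarrow> int pmf" where
  "poisson_diff_pmf \<mu> =
     map_pmf (\<lambda>(i, j). int i - int j) (pair_pmf (poisson_pmf \<mu>) (poisson_pmf \<mu>))"

lemma map_pmf_uminus_poisson_diff_pmf:
  "map_pmf uminus (poisson_diff_pmf \<mu>) = poisson_diff_pmf \<mu>"
proof -
  let ?Q = "poisson_pmf \<mu>"
  have "map_pmf uminus (poisson_diff_pmf \<mu>) =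
        map_pmf (\<lambda>(i, j). int i - int j) (map_pmf (\<lambda>(i, j). (j, i)) (pair_pmf ?Q ?Q))"
    by (simp add: poisson_diff_pmf_def pmf.map_comp comp_def case_prod_beta)
  also have "map_pmf (\<lambda>(i, j). (j, i)) (pair_pmf ?Q ?Q) = pair_pmf ?Q ?Q"
    by (rule pair_commute_pmf[symmetric])
  finally show ?thesis by (simp add: poisson_diff_pmf_def)
qed

lemma pmf_poisson_diff_uminus: "pmf (poisson_diff_pmf \<mu>) (- k) = pmf (poisson_diff_pmf \<mu>) k"
  by (metis map_pmf_uminus_poisson_diff_pmf inj_def neg_equal_iff_equal pmf_map_inj')

lemma pmf_poisson_diff_pmf_pos:
  assumes "\<mu> > 0"
  shows "pmf (poisson_diff_pmf \<mu>) k > 0"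
proof -
  have "(\<lambda>(i, j). int i - int j) (nat k, nat (- k)) = k" by simp
  then have "k \<in> set_pmf (poisson_diff_pmf \<mu>)"
    unfolding poisson_diff_pmf_def set_map_pmf set_pair_pmf set_pmf_poisson[OF assms]
    by (rule image_eqI[OF sym]) simp
  then show ?thesis by (simp add: pmf_positive)
qed

lemma poisson_diff_pmf_sums:
  "(\<lambda>j. pmf (poisson_pmf \<mu>) (j + K) * pmf (poisson_pmf \<mu>) j) sums pmf (poisson_diff_pmf \<mu>) (int K)"
proof -
  let ?P = "pair_pmf (poisson_pmf \<mu>) (poisson_pmf \<mu>)"
  define g where "g = (\<lambda>j::nat. (j + K, j))"
  have "inj g" by (auto simp: g_def inj_def)
  have preimage: "(\<lambda>(i, j). int i - int j) -` {int K} = range g"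
    by (auto simp: g_def image_iff)
  have "(\<lambda>j. pmf ?P (g j)) sums infsetsum (\<lambda>j. pmf ?P (g j)) UNIV"
    using abs_summable_on_reindex_iff[OF \<open>inj g\<close>, of "pmf ?P"] by (intro sums_infsetsum_nat') auto
  also have "infsetsum (\<lambda>j. pmf ?P (g j)) UNIV = pmf (poisson_diff_pmf \<mu>) (int K)"
    by (simp add: poisson_diff_pmf_def pmf_map measure_pmf_conv_infsetsum preimage
                  infsetsum_reindex[OF \<open>inj g\<close>])
  finally show ?thesis by (simp add: g_def pmf_pair)
qed

lemma poisson_pmf_log_concave:
  assumes "\<mu> > 0"
  shows "pmf (poisson_pmf \<mu>) (j + Suc K) * pmf (poisson_pmf \<mu>) j
         \<le> pmf (poisson_pmf \<mu>) (j + K) * pmf (poisson_pmf \<mu>) (Suc j)"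
proof -
  have Suc: "pmf (poisson_pmf \<mu>) (Suc i) = pmf (poisson_pmf \<mu>) i * (\<mu> / Suc i)" for i
    using assms by (simp add: fact_Suc mult_ac)
  have "\<mu> / Suc (j + K) \<le> \<mu> / Suc j"
    using assms by (intro divide_left_mono) auto
  from mult_left_mono[OF this, of "pmf (poisson_pmf \<mu>) (j + K) * pmf (poisson_pmf \<mu>) j"]
  show ?thesis
    unfolding add_Suc_right Suc by (simp add: mult_ac)
qed

text \<open>With \<open>p K = \<Sum>j. A j\<close> for \<open>A j = q (j + K) q j\<close>, log-concavity of the Poisson weights
  \<open>q\<close> bounds the \<open>j\<close>-th term of the series for \<open>p (K + 1)\<close> by
  \<open>\<surd>(A j A (j + 1)) \<le> (A j + A (j + 1)) / 2\<close>; summing gives \<open>p (K + 1) \<le> p K - A 0 / 2\<close>.\<close>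
lemma pmf_poisson_diff_Suc_less:
  assumes "\<mu> > 0"
  shows "pmf (poisson_diff_pmf \<mu>) (int (Suc K)) < pmf (poisson_diff_pmf \<mu>) (int K)"
proof -
  define q where "q = pmf (poisson_pmf \<mu>)"
  define p where "p = pmf (poisson_diff_pmf \<mu>)"
  define A where "A = (\<lambda>j. q (j + K) * q j)"
  define x where "x = (\<lambda>j. q (j + Suc K) * q j)"
  have A_sums: "A sums p (int K)"
    unfolding A_def p_def q_def by (rule poisson_diff_pmf_sums)
  have x_sums: "x sums p (int (Suc K))"
    unfolding x_def p_def q_def by (rule poisson_diff_pmf_sums)
  have x_le: "x j \<le> (A j + A (Suc j)) / 2" for j
  proof (rule power2_le_imp_le)
    have "x j ^ 2 \<le> (q (j + K) * q (Suc j)) * (q (j + Suc K) * q j)"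
      unfolding x_def power2_eq_square
      by (intro mult_right_mono) (use poisson_pmf_log_concave[OF assms] in \<open>simp_all add: q_def\<close>)
    also have "\<dots> = A j * A (Suc j)" by (simp add: A_def mult_ac)
    also have "\<dots> \<le> ((A j + A (Suc j)) / 2) ^ 2"
      using sum_squares_ge_zero[of "A j - A (Suc j)" 0] by (simp add: power2_eq_square field_simps)
    finally show "x j ^ 2 \<le> ((A j + A (Suc j)) / 2) ^ 2" .
    show "0 \<le> (A j + A (Suc j)) / 2" by (simp add: A_def q_def)
  qed
  have "(\<lambda>j. (A j + A (Suc j)) / 2) sums ((p (int K) + (p (int K) - A 0)) / 2)"
    using A_sums by (intro sums_divide sums_add) (simp_all add: sums_Suc_iff)
  from sums_le[OF x_le x_sums this] have "p (int (Suc K)) \<le> p (int K) - A 0 / 2"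
    by simp
  moreover have "A 0 > 0" using assms by (simp add: A_def q_def)
  ultimately show ?thesis by (simp add: p_def)
qed

lemma pmf_poisson_diff_abs_less:
  assumes "\<mu> > 0" and "\<bar>k\<bar> < \<bar>k'\<bar>"
  shows "pmf (poisson_diff_pmf \<mu>) k' < pmf (poisson_diff_pmf \<mu>) k"
proof -
  let ?p = "pmf (poisson_diff_pmf \<mu>)"
  have abs_eq: "?p i = ?p (int (nat \<bar>i\<bar>))" for i
  proof (cases "i \<ge> 0")
    case False
    then have "i = - int (nat \<bar>i\<bar>)" by simp
    then show ?thesis by (metis pmf_poisson_diff_uminus)
  qed simp
  have "nat \<bar>k\<bar> < nat \<bar>k'\<bar>" using assms(2) by simp
  moreover have "- ?p (int K) < - ?p (int (Suc K))" for K
    using pmf_poisson_diff_Suc_less[OF assms(1)] by simp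
  ultimately have "- ?p (int (nat \<bar>k\<bar>)) < - ?p (int (nat \<bar>k'\<bar>))"
    using lift_Suc_mono_less[of "\<lambda>K. - ?p (int K)"] by blast
  then show ?thesis by (simp only: abs_eq[of k] abs_eq[of k'])
qed

lemma skellam_pmf_eq_poisson_diff_pmf:
  "s \<noteq> 0 \<Longrightarrow> skellam_pmf \<beta> s = poisson_diff_pmf (\<beta> * s)"
  by (simp add: skellam_pmf_def poisson_diff_pmf_def)

lemma map_pmf_uminus_skellam_pmf: "map_pmf uminus (skellam_pmf \<beta> s) = skellam_pmf \<beta> s"
proof (cases "s = 0")
  case False
  then show ?thesis
    by (simp add: skellam_pmf_eq_poisson_diff_pmf map_pmf_uminus_poisson_diff_pmf)
qed (simp add: skellam_pmf_def)

lemma pmf_skellam_pmf_pos: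
  assumes "\<beta> > 0" and "s > 0"
  shows "pmf (skellam_pmf \<beta> s) k > 0"
  using assms by (simp add: skellam_pmf_eq_poisson_diff_pmf pmf_poisson_diff_pmf_pos)

lemma pmf_skellam_pmf_abs_less:
  assumes "\<beta> > 0" and "s > 0" and "\<bar>k\<bar> < \<bar>k'\<bar>"
  shows "pmf (skellam_pmf \<beta> s) k' < pmf (skellam_pmf \<beta> s) k"
  using assms by (simp add: skellam_pmf_eq_poisson_diff_pmf pmf_poisson_diff_abs_less)

lemma set_pmf_skellam_pmf:
  assumes "\<beta> > 0" and "s > 0"
  shows "set_pmf (skellam_pmf \<beta> s) = UNIV"
  using assms pmf_poisson_diff_pmf_pos[of "\<beta> * s"]
  by (auto simp: skellam_pmf_eq_poisson_diff_pmf set_pmf_iff less_le)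

lemma cond_pmf_pair_pmf_fst:
  assumes "x \<in> set_pmf X"
  shows "cond_pmf (pair_pmf X D) ({x} \<times> UNIV) = map_pmf (Pair x) D"
proof (rule pmf_eqI)
  have nonempty: "set_pmf (pair_pmf X D) \<inter> ({x} \<times> UNIV) \<noteq> {}"
    using assms set_pmf_not_empty[of D] by (auto simp: set_pair_pmf)
  have "measure_pmf.prob (pair_pmf X D) ({x} \<times> UNIV) = pmf X x"
    using measure_map_pmf[of fst "pair_pmf X D" "{x}"]
    by (simp add: map_fst_pair_pmf measure_pmf_single vimage_fst)
  moreover have "pmf X x \<noteq> 0" using assms by (simp add: set_pmf_iff)
  ultimately show "pmf (cond_pmf (pair_pmf X D) ({x} \<times> UNIV)) z = pmf (map_pmf (Pair x) D) z" for z
    unfolding pair_return_pmf1[symmetric] by (cases z) (auto simp: pmf_cond[OF nonempty] pmf_pair)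
qed

lemma cond_pmf_map_pair_pmf_fst:
  assumes "x \<in> set_pmf X"
  shows "cond_pmf (map_pmf (\<lambda>(x, d). (x, f x d)) (pair_pmf X D)) {p. fst p = x} =
         map_pmf (\<lambda>d. (x, f x d)) D"
proof -
  have preimage: "(\<lambda>(x, d). (x, f x d)) -` {p. fst p = x} = {x} \<times> UNIV" by auto
  have nonempty: "set_pmf (pair_pmf X D) \<inter> (\<lambda>(x, d). (x, f x d)) -` {p. fst p = x} \<noteq> {}"
    unfolding preimage using assms set_pmf_not_empty[of D] by (auto simp: set_pair_pmf)
  then show ?thesis
    unfolding cond_map_pmf[OF nonempty] preimage cond_pmf_pair_pmf_fst[OF assms]
    by (simp add: pmf.map_comp comp_def)
qed

lemma joint_Zt_Z1_eq_map_pair_pmf: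
  "joint_Zt_Z1 \<beta> t =
     map_pmf (\<lambda>(x, d). (x, x + d)) (pair_pmf (skellam_pmf \<beta> t) (skellam_pmf \<beta> (1 - t)))"
  by (simp add: joint_Zt_Z1_def pair_pmf_def map_bind_pmf)

definition shift_interval_prob :: "int pmf \<Rightarrow> ereal \<Rightarrow> ereal \<Rightarrow> int \<Rightarrow> real" where
  "shift_interval_prob P lo hi y =
     measure_pmf.prob P {d. lo \<le> ereal (of_int (y + d)) \<and> ereal (of_int (y + d)) < hi}"

lemma hfun_eq_shift_interval_prob:
  assumes "\<beta> > 0" and "t > 0"
  shows "hfun \<beta> a n y t = shift_interval_prob (skellam_pmf \<beta> (1 - t)) (a n) (a (Suc n)) y"
proof -
  have "y \<in> set_pmf (skellam_pmf \<beta> t)" using set_pmf_skellam_pmf[OF assms] by simp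
  then show ?thesis
    by (simp add: hfun_def shift_interval_prob_def joint_Zt_Z1_eq_map_pair_pmf
                  cond_pmf_map_pair_pmf_fst vimage_def)
qed

lemma shift_interval_prob_of_int:
  fixes A B y :: int
  shows "shift_interval_prob P (of_int A) (of_int B) y = measure_pmf.prob P {d. A \<le> y + d \<and> y + d < B}"
  by (simp add: shift_interval_prob_def del: of_int_add)

lemma measure_pmf_prob_insert:
  "x \<notin> S \<Longrightarrow> measure_pmf.prob M (insert x S) = pmf M x + measure_pmf.prob M S"
  using measure_pmf.finite_measure_Union[of "{x}" M S]
  by (simp add: measure_pmf_single)

lemma shift_interval_prob_Suc:
  fixes A B y :: int
  assumes "A \<le> B"
  shows "shift_interval_prob P (of_int A) (of_int B) (y + 1) + pmf P (B - 1 - y) =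
         shift_interval_prob P (of_int A) (of_int B) y + pmf P (A - 1 - y)"
proof -
  define S where "S = (\<lambda>y. {d. A \<le> y + d \<and> y + d < B})"
  have prob_S: "shift_interval_prob P (of_int A) (of_int B) z = measure_pmf.prob P (S z)" for z
    unfolding shift_interval_prob_of_int S_def ..
  have "B - 1 - y \<notin> S (y + 1)" and "A - 1 - y \<notin> S y"
    by (auto simp: S_def)
  then have "measure_pmf.prob P (S (y + 1)) + pmf P (B - 1 - y) =
             measure_pmf.prob P (insert (B - 1 - y) (S (y + 1)))" and
            "measure_pmf.prob P (insert (A - 1 - y) (S y)) =
             measure_pmf.prob P (S y) + pmf P (A - 1 - y)"
    by (simp_all add: measure_pmf_prob_insert)
  moreover have "insert (B - 1 - y) (S (y + 1)) = insert (A - 1 - y) (S y)"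
    using assms by (auto simp: S_def)
  ultimately show ?thesis
    unfolding prob_S by simp
qed

lemma shift_interval_prob_Suc_lower_unbounded:
  fixes B y :: int
  shows "shift_interval_prob P (-\<infinity>) (of_int B) (y + 1) + pmf P (B - 1 - y) =
         shift_interval_prob P (-\<infinity>) (of_int B) y"
proof -
  have "{d. y + d < B} = insert (B - 1 - y) {d. y + 1 + d < B}" by auto
  then show ?thesis
    by (simp add: shift_interval_prob_def measure_pmf_prob_insert add.commute del: of_int_add)
qed

lemma shift_interval_prob_Suc_upper_unbounded:
  fixes A y :: int
  shows "shift_interval_prob P (of_int A) \<infinity> (y + 1) =
         shift_interval_prob P (of_int A) \<infinity> y + pmf P (A - 1 - y)"
proof -
  have "{d. A \<le> y + 1 + d} = insert (A - 1 - y) {d. A \<le> y + d}" by auto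
  then show ?thesis
    by (simp add: shift_interval_prob_def measure_pmf_prob_insert add.commute del: of_int_add)
qed

lemma shift_interval_prob_reflect:
  fixes A B y :: int
  assumes "map_pmf uminus P = P"
  shows "shift_interval_prob P (of_int A) (of_int B) (A + B - 1 - y) =
         shift_interval_prob P (of_int A) (of_int B) y"
proof -
  let ?S = "{d. A \<le> A + B - 1 - y + d \<and> A + B - 1 - y + d < B}"
  have "measure_pmf.prob P ?S = measure_pmf.prob (map_pmf uminus P) ?S"
    by (simp only: assms)
  also have "\<dots> = measure_pmf.prob P (uminus -` ?S)"
    by (rule measure_map_pmf)
  also have "uminus -` ?S = {d. A \<le> y + d \<and> y + d < B}"
    by auto
  finally show ?thesis
    unfolding shift_interval_prob_of_int .
qed

context
  fixes P :: "int pmf" and A B :: int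
  assumes "A < B" and unimodal: "\<And>k k'. \<bar>k\<bar> < \<bar>k'\<bar> \<Longrightarrow> pmf P k' < pmf P k"
begin

lemma shift_interval_prob_strict_mono_on:
  "strict_mono_on {y. 2 * y \<le> A + B - 1} (shift_interval_prob P (of_int A) (of_int B))"
proof (rule strict_mono_on_int_Suc)
  fix y assume "y + 1 \<in> {y. 2 * y \<le> A + B - 1}"
  then have "pmf P (B - 1 - y) < pmf P (A - 1 - y)"
    using \<open>A < B\<close> by (intro unimodal) (simp add: abs_if)
  then show "shift_interval_prob P (of_int A) (of_int B) y < shift_interval_prob P (of_int A) (of_int B) (y + 1)"
    using shift_interval_prob_Suc[of A B P y] \<open>A < B\<close> by simp
qed auto

lemma shift_interval_prob_strict_antimono_on:
  "strict_antimono_on {y. A + B - 1 \<le> 2 * y} (shift_interval_prob P (of_int A) (of_int B))"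
proof (rule strict_antimono_on_int_Suc)
  fix y assume "y \<in> {y. A + B - 1 \<le> 2 * y}"
  then have "pmf P (A - 1 - y) < pmf P (B - 1 - y)"
    using \<open>A < B\<close> by (intro unimodal) (simp add: abs_if)
  then show "shift_interval_prob P (of_int A) (of_int B) (y + 1) < shift_interval_prob P (of_int A) (of_int B) y"
    using shift_interval_prob_Suc[of A B P y] \<open>A < B\<close> by simp
qed auto

end

lemma shift_interval_prob_lower_unbounded_strict_antimono:
  assumes "\<And>k. pmf P k > 0"
  shows "strict_antimono_on UNIV (shift_interval_prob P (-\<infinity>) (of_int B))"
proof (rule strict_antimono_on_int_Suc)
  show "shift_interval_prob P (-\<infinity>) (of_int B) (y + 1) < shift_interval_prob P (-\<infinity>) (of_int B) y" for y
    using shift_interval_prob_Suc_lower_unbounded[of P B y] assms[of "B - 1 - y"] by linarith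
qed auto

lemma shift_interval_prob_upper_unbounded_strict_mono:
  assumes "\<And>k. pmf P k > 0"
  shows "strict_mono_on UNIV (shift_interval_prob P (of_int A) \<infinity>)"
proof (rule strict_mono_on_int_Suc)
  show "shift_interval_prob P (of_int A) \<infinity> y < shift_interval_prob P (of_int A) \<infinity> (y + 1)" for y
    using shift_interval_prob_Suc_upper_unbounded[of P A y] assms[of "A - 1 - y"] by linarith
qed auto

lemma mid_eq:
  fixes A B :: int
  assumes "a n = of_int A" and "a (Suc n) = of_int B"
  shows "mid a n = real_of_int (A + B - 1) / 2"
  using assms by (simp add: mid_def)

lemma hfun_reflect:
  fixes A B :: int
  assumes "\<beta> > 0" and "t > 0" and "a n = of_int A" and "a (Suc n) = of_int B"
    and "real_of_int y + real_of_int y' = 2 * mid a n"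
  shows "hfun \<beta> a n y t = hfun \<beta> a n y' t"
proof -
  have "real_of_int (y + y') = real_of_int (A + B - 1)"
    using assms(5) by (simp add: mid_eq[OF assms(3,4)])
  then have "y' = A + B - 1 - y"
    by (simp only: of_int_eq_iff)
  then show ?thesis
    using assms(1-4) by (simp add: hfun_eq_shift_interval_prob shift_interval_prob_reflect
                                   map_pmf_uminus_skellam_pmf)
qed

lemma hfun_ceiling_mid_eq_floor_mid:
  fixes A B :: int
  assumes "\<beta> > 0" and "t > 0" and "a n = of_int A" and "a (Suc n) = of_int B"
    and "mid a n \<notin> \<int>"
  shows "hfun \<beta> a n \<lceil>mid a n\<rceil> t = hfun \<beta> a n \<lfloor>mid a n\<rfloor> t"
proof (rule hfun_reflect[OF assms(1-4)])
  show "real_of_int \<lceil>mid a n\<rceil> + real_of_int \<lfloor>mid a n\<rfloor> = 2 * mid a n"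
    using assms(5) ceiling_add_floor_half[of "A + B - 1"] unfolding mid_eq[OF assms(3,4)] by simp
qed

lemma hfun_strict_mono_antimono:
  assumes "\<beta> > 0" and "t \<in> {0<..<1}" and "a n < a (Suc n)"
    and lo: "a n = -\<infinity> \<or> (\<exists>A::int. a n = of_int A)"
    and hi: "a (Suc n) = \<infinity> \<or> (\<exists>B::int. a (Suc n) = of_int B)"
    and bounded: "a n \<noteq> -\<infinity> \<or> a (Suc n) \<noteq> \<infinity>"
  shows "strict_mono_on {y. ereal (real_of_int y) \<le> mlow a n} (\<lambda>y. hfun \<beta> a n y t)
       \<and> strict_antimono_on {y. mhigh a n \<le> ereal (real_of_int y)} (\<lambda>y. hfun \<beta> a n y t)"
proof -
  define P where "P = skellam_pmf \<beta> (1 - t)"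
  have pos: "pmf P k > 0" and unimodal: "\<bar>k\<bar> < \<bar>k'\<bar> \<Longrightarrow> pmf P k' < pmf P k" for k k'
    using assms(1,2) by (simp_all add: P_def pmf_skellam_pmf_pos pmf_skellam_pmf_abs_less)
  have h: "(\<lambda>y. hfun \<beta> a n y t) = shift_interval_prob P (a n) (a (Suc n))"
    using assms(1,2) by (simp add: P_def hfun_eq_shift_interval_prob fun_eq_iff)
  consider B where "a n = -\<infinity>" "a (Suc n) = of_int B"
    | A where "a n = of_int A" "a (Suc n) = \<infinity>"
    | A B where "a n = of_int A" "a (Suc n) = of_int B" "A < B"
    using lo hi bounded \<open>a n < a (Suc n)\<close> by fastforce
  then show ?thesis
  proof cases
    case 1
    then show ?thesis
      using shift_interval_prob_lower_unbounded_strict_antimono[OF pos]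
      by (simp add: h mlow_def mhigh_def)
  next
    case 2
    then show ?thesis
      using shift_interval_prob_upper_unbounded_strict_mono[OF pos]
      by (simp add: h mlow_def mhigh_def)
  next
    case 3
    then have "{y. ereal (real_of_int y) \<le> mlow a n} = {y. 2 * y \<le> A + B - 1}"
      and "{y. mhigh a n \<le> ereal (real_of_int y)} = {y. A + B - 1 \<le> 2 * y}"
      by (simp_all add: mlow_def mhigh_def mid_eq le_floor_half_iff ceiling_half_le_iff
                   del: of_int_add of_int_diff)
    then show ?thesis
      using 3 shift_interval_prob_strict_mono_on[OF \<open>A < B\<close> unimodal]
            shift_interval_prob_strict_antimono_on[OF \<open>A < B\<close> unimodal]
      by (simp add: h)
  qed
qed

theorem lemma5p2:
  fixes \<beta> :: real and N :: nat and a :: "nat \<Rightarrow> ereal" and n :: nat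
  assumes beta_pos: "\<beta> > 0"
    and N_ge: "2 \<le> N"
    and a_first: "a 1 = -\<infinity>"
    and a_last: "a (Suc N) = \<infinity>"
    and a_strict: "\<forall>k \<in> {1..N}. a k < a (Suc k)"
    and a_int: "\<forall>k \<in> {2..N}. \<exists>z::int. a k = ereal (real_of_int z)"
    and m_nonint: "\<forall>k \<in> {2..N-1}. mid a k \<notin> \<int>"
    and n_range: "n \<in> {1..N}"
  shows "(1 < n \<and> n < N \<longrightarrow>
            (\<forall>t \<in> {0<..1}. (\<forall>y y'. real_of_int y + real_of_int y' = 2 * mid a n
                                 \<longrightarrow> hfun \<beta> a n y t = hfun \<beta> a n y' t)
                          \<and> hfun \<beta> a n \<lceil>mid a n\<rceil> t = hfun \<beta> a n \<lfloor>mid a n\<rfloor> t))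
       \<and> (\<forall>t \<in> {0<..<1}.
            strict_mono_on {y::int. ereal (real_of_int y) \<le> mlow a n} (\<lambda>y. hfun \<beta> a n y t)
          \<and> strict_antimono_on {y::int. mhigh a n \<le> ereal (real_of_int y)} (\<lambda>y. hfun \<beta> a n y t))"
proof (intro conjI impI ballI allI)
  fix t :: real
  assume inner: "1 < n \<and> n < N" and "t \<in> {0<..1}"
  then have "t > 0" and "n \<in> {2..N}" and "Suc n \<in> {2..N}" by auto
  then obtain A B :: int where A: "a n = of_int A" and B: "a (Suc n) = of_int B"
    using a_int by blast
  show "hfun \<beta> a n y t = hfun \<beta> a n y' t"
    if "real_of_int y + real_of_int y' = 2 * mid a n" for y y'
    by (rule hfun_reflect[OF beta_pos \<open>t > 0\<close> A B that])
  show "hfun \<beta> a n \<lceil>mid a n\<rceil> t = hfun \<beta> a n \<lfloor>mid a n\<rfloor> t"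
    using m_nonint inner by (intro hfun_ceiling_mid_eq_floor_mid[OF beta_pos \<open>t > 0\<close> A B]) auto
next
  fix t :: real
  assume t: "t \<in> {0<..<1}"
  have lo: "a n = -\<infinity> \<or> (\<exists>A::int. a n = of_int A)"
    using a_first a_int n_range by (cases "n = 1") auto
  have hi: "a (Suc n) = \<infinity> \<or> (\<exists>B::int. a (Suc n) = of_int B)"
    using a_last a_int n_range by (cases "n = N") auto
  have "n \<in> {2..N} \<or> Suc n \<in> {2..N}"
    using n_range N_ge by auto
  then have bounded: "a n \<noteq> -\<infinity> \<or> a (Suc n) \<noteq> \<infinity>"
    using a_int by fastforce
  have "a n < a (Suc n)"
    using a_strict n_range by blast
  from hfun_strict_mono_antimono[OF beta_pos t this lo hi bounded]
  show "strict_mono_on {y. ereal (real_of_int y) \<le> mlow a n} (\<lambda>y. hfun \<beta> a n y t)"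
    and "strict_antimono_on {y. mhigh a n \<le> ereal (real_of_int y)} (\<lambda>y. hfun \<beta> a n y t)"
    by auto
qed

end
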